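(* Suppose $G$ is connected and $\Gamma_G$ is population monotonic. Then (a) any two triangles (subgraphs isomorphic to $K_3$) of $G$ that share at least one vertex share a common edge, and this common edge is the strictly maximum-weight edge of each of the two triangles; and (b) any two triangles of $G$ share at least one vertex, and in fact there is a single edge $uv$ of $G$ contained in every triangle of $G$ which is the maximum-weight edge of every triangle of $G$.
   Context: $G=(V,E;w)$ is a finite simple graph with edge weights $w:E\to\mathbb{R}$, $w_e>0$ for all $e\in E$. The matching game on $G$ is the cooperative game $\Gamma_G=(N,\gamma)$ with player set $N=V$ and, for $S\subseteq N$, $\gamma(S)$ equal to the maximum weight of a matching in the induced subgraph $G[S]$ (so $\gamma(\emptyset)=0$). A population monotonic allocation scheme (PMAS) is a family $(\boldsymbol{x}_S)_{\emptyset\neq S\subseteq N}$ with $\boldsymbol{x}_S=(x_{S,i})_{i\in S}\in\mathbb{R}^S$ such that (efficiency) $\sum_{i\in S}x_{S,i}=\gamma(S)$ for every nonempty $S\subseteq N$, and (monotonicity) $x_{S,i}\le x_{T,i}$ whenever $\emptyset\ne S\subseteq T\subseteq N$ and $i\in S$. $\Gamma_G$ is called population monotonic if it admits a PMAS. *)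

theory Defs
  imports Complex_Main
begin

definition simple_graph :: "'a set \<Rightarrow> 'a set set \<Rightarrow> bool" where
  "simple_graph V E \<longleftrightarrow> finite V \<and> (\<forall>e\<in>E. e \<subseteq> V \<and> card e = 2)"

definition adj :: "'a set set \<Rightarrow> ('a \<times> 'a) set" where
  "adj E = {(u, v). {u, v} \<in> E}"

definition connected_graph :: "'a set \<Rightarrow> 'a set set \<Rightarrow> bool" where
  "connected_graph V E \<longleftrightarrow> (\<forall>u\<in>V. \<forall>v\<in>V. (u, v) \<in> (adj E)\<^sup>*)"

definition matching_in :: "'a set set \<Rightarrow> 'a set \<Rightarrow> 'a set set \<Rightarrow> bool" where
  "matching_in E S M \<longleftrightarrow> M \<subseteq> E \<and> (\<forall>e\<in>M. e \<subseteq> S)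
     \<and> (\<forall>e1\<in>M. \<forall>e2\<in>M. e1 \<noteq> e2 \<longrightarrow> e1 \<inter> e2 = {})"

definition gamma :: "'a set set \<Rightarrow> ('a set \<Rightarrow> real) \<Rightarrow> 'a set \<Rightarrow> real" where
  "gamma E w S = Max ((\<lambda>M. \<Sum>e\<in>M. w e) ` {M. matching_in E S M})"

definition is_PMAS :: "'a set \<Rightarrow> 'a set set \<Rightarrow> ('a set \<Rightarrow> real) \<Rightarrow> ('a set \<Rightarrow> 'a \<Rightarrow> real) \<Rightarrow> bool" where
  "is_PMAS V E w x \<longleftrightarrow>
     (\<forall>S. S \<subseteq> V \<and> S \<noteq> {} \<longrightarrow> (\<Sum>i\<in>S. x S i) = gamma E w S) \<and>
     (\<forall>S T i. S \<noteq> {} \<and> S \<subseteq> T \<and> T \<subseteq> V \<and> i \<in> S \<longrightarrow> x S i \<le> x T i)"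

definition population_monotonic :: "'a set \<Rightarrow> 'a set set \<Rightarrow> ('a set \<Rightarrow> real) \<Rightarrow> bool" where
  "population_monotonic V E w \<longleftrightarrow> (\<exists>x. is_PMAS V E w x)"

definition triangle :: "'a set \<Rightarrow> 'a set set \<Rightarrow> 'a set \<Rightarrow> bool" where
  "triangle V E t \<longleftrightarrow> t \<subseteq> V \<and> card t = 3 \<and> (\<forall>u\<in>t. \<forall>v\<in>t. u \<noteq> v \<longrightarrow> {u, v} \<in> E)"

definition strict_max_edge :: "'a set \<Rightarrow> ('a set \<Rightarrow> real) \<Rightarrow> 'a set \<Rightarrow> bool" where
  "strict_max_edge t w e \<longleftrightarrow> e \<subseteq> t \<and> card e = 2 \<and>
     (\<forall>f. f \<subseteq> t \<and> card f = 2 \<and> f \<noteq> e \<longrightarrow> w f < w e)"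

end

theory Submission
  imports Defs
begin

text \<open>
  Write \<open>share u v\<close> for the payoff of \<open>u\<close> in the two-player coalition \<open>{u, v}\<close>, so that
  \<open>share u v + share v u\<close> is the weight of \<open>uv\<close>. A coalition of three vertices is worth the
  weight of a single edge, and monotonicity compares its payoffs with the shares. In a triangle
  whose heaviest edge is \<open>uv\<close> this forces the third vertex (the apex) to get nothing on its
  edges and makes \<open>uv\<close> strictly heaviest; on an induced path \<open>p - c - q\<close> the centre keeps a
  positive share of both edges while one of the leaves gets nothing. Playing these facts against
  each other: two triangles with a common edge both have it as their top edge, two triangles
  never meet in a single vertex, and every neighbour of a vertex outside the top edge \<open>uv\<close> of a
  triangle lies in \<open>{u, v}\<close>. By connectivity \<open>{u, v}\<close> is then a vertex cover, so every
  triangle consists of \<open>u\<close>, \<open>v\<close> and one more vertex, with top edge \<open>uv\<close>.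
\<close>

lemma simple_graph_finite_edges:
  assumes "simple_graph V E"
  shows "finite E"
proof -
  have "E \<subseteq> Pow V" and "finite V" using assms by (auto simp: simple_graph_def)
  then show ?thesis by (meson finite_Pow_iff finite_subset)
qed

lemma finite_matchings: "finite E \<Longrightarrow> finite {M. matching_in E S M}"
  by (rule finite_subset[of _ "Pow E"]) (auto simp: matching_in_def)

lemma matching_weight_le_gamma:
  "finite E \<Longrightarrow> matching_in E S M \<Longrightarrow> (\<Sum>e\<in>M. w e) \<le> gamma E w S"
  unfolding gamma_def by (rule Max_ge) (auto simp: finite_matchings)

lemma gamma_nonneg: "finite E \<Longrightarrow> 0 \<le> gamma E w S"
  using matching_weight_le_gamma[of E S "{}"] by (simp add: matching_in_def)

lemma gamma_le_if_matchings_le: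
  assumes "finite E" and "\<And>M. matching_in E S M \<Longrightarrow> (\<Sum>e\<in>M. w e) \<le> B"
  shows "gamma E w S \<le> B"
proof -
  have "{} \<in> {M. matching_in E S M}" by (simp add: matching_in_def)
  then show ?thesis
    unfolding gamma_def using assms finite_matchings[of E S] by (subst Max_le_iff) auto
qed

lemma matching_on_three_vertices:
  assumes G: "simple_graph V E" and M: "matching_in E S M" and S: "finite S" "card S \<le> 3"
  shows "M = {} \<or> (\<exists>e\<in>E. M = {e} \<and> e \<subseteq> S)"
proof (cases "M = {}")
  case False
  then obtain e where e: "e \<in> M" by blast
  have "M = {e}"
  proof (rule ccontr)
    assume "M \<noteq> {e}"
    then obtain e' where e': "e' \<in> M" "e' \<noteq> e" using e by blast
    have sub: "e \<subseteq> S" "e' \<subseteq> S" and disj: "e \<inter> e' = {}"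
      using M e e' by (auto simp: matching_in_def)
    have "card e = 2" "card e' = 2"
      using G M e e' by (auto simp: matching_in_def simple_graph_def)
    then have "card (e \<union> e') = 4"
      using disj sub S(1) by (simp add: card_Un_disjoint finite_subset)
    moreover have "card (e \<union> e') \<le> card S" using sub S(1) by (intro card_mono) auto
    ultimately show False using S(2) by simp
  qed
  then show ?thesis using M e by (auto simp: matching_in_def)
qed simp

lemma gamma_le_if_card_le_3:
  assumes G: "simple_graph V E" and S: "finite S" "card S \<le> 3" and "0 \<le> B"
    and "\<And>e. e \<in> E \<Longrightarrow> e \<subseteq> S \<Longrightarrow> w e \<le> B"
  shows "gamma E w S \<le> B"
proof (rule gamma_le_if_matchings_le)
  show "finite E" using G by (rule simple_graph_finite_edges)
  fix M assume "matching_in E S M"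
  from matching_on_three_vertices[OF G this S] show "(\<Sum>e\<in>M. w e) \<le> B"
    using assms(4,5) by auto
qed

lemma two_subset_of_triple:
  assumes "f \<subseteq> {a, b, c}" and "card f = 2"
  shows "f = {a, b} \<or> f = {a, c} \<or> f = {b, c}"
proof -
  obtain p q where f: "f = {p, q}" "p \<noteq> q" using assms(2) by (meson card_2_iff)
  then have "p \<in> {a, b, c}" "q \<in> {a, b, c}" using assms(1) by auto
  then show ?thesis using f by (auto simp: insert_commute)
qed

locale matching_pmas =
  fixes V :: "'a set" and E :: "'a set set" and w :: "'a set \<Rightarrow> real"
    and x :: "'a set \<Rightarrow> 'a \<Rightarrow> real"
  assumes simple: "simple_graph V E"
    and weight_pos: "\<forall>e\<in>E. 0 < w e"
    and pmas: "is_PMAS V E w x"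
begin

abbreviation adjacent :: "'a \<Rightarrow> 'a \<Rightarrow> bool" where
  "adjacent u v \<equiv> {u, v} \<in> E"

abbreviation wt :: "'a \<Rightarrow> 'a \<Rightarrow> real" where
  "wt u v \<equiv> w {u, v}"

abbreviation share :: "'a \<Rightarrow> 'a \<Rightarrow> real" where
  "share u v \<equiv> x {u, v} u"

lemma adjacent_sym: "adjacent u v \<Longrightarrow> adjacent v u"
  by (simp add: insert_commute)

lemma wt_sym: "wt u v = wt v u"
  by (simp add: insert_commute)

lemma adjacentD:
  assumes "adjacent u v"
  shows "u \<noteq> v" and "u \<in> V" and "v \<in> V" and "0 < wt u v"
proof -
  have "card {u, v} = 2" and "{u, v} \<subseteq> V" using simple assms by (auto simp: simple_graph_def)
  then show "u \<noteq> v" "u \<in> V" "v \<in> V" by (auto simp: card_insert_if split: if_splits)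
  show "0 < wt u v" using weight_pos assms by blast
qed

lemma edge_card: "e \<in> E \<Longrightarrow> card e = 2"
  using simple by (simp add: simple_graph_def)

lemma efficiency: "S \<subseteq> V \<Longrightarrow> S \<noteq> {} \<Longrightarrow> (\<Sum>i\<in>S. x S i) = gamma E w S"
  using pmas by (simp add: is_PMAS_def)

lemma monotonicity: "S \<noteq> {} \<Longrightarrow> S \<subseteq> T \<Longrightarrow> T \<subseteq> V \<Longrightarrow> i \<in> S \<Longrightarrow> x S i \<le> x T i"
  using pmas by (simp add: is_PMAS_def)

lemma payoff_nonneg:
  assumes "T \<subseteq> V" and "a \<in> T"
  shows "0 \<le> x T a"
proof -
  have "0 \<le> gamma E w {a}" using simple_graph_finite_edges[OF simple] by (rule gamma_nonneg)
  also have "\<dots> = x {a} a" using efficiency[of "{a}"] assms by auto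
  also have "\<dots> \<le> x T a" using monotonicity[of "{a}" T a] assms by auto
  finally show ?thesis .
qed

lemma share_le_payoff:
  "adjacent u v \<Longrightarrow> T \<subseteq> V \<Longrightarrow> u \<in> T \<Longrightarrow> v \<in> T \<Longrightarrow> share u v \<le> x T u"
  by (rule monotonicity) auto

lemma share_nonneg: "adjacent u v \<Longrightarrow> 0 \<le> share u v"
  using adjacentD by (intro payoff_nonneg) auto

lemma gamma_edge:
  assumes uv: "adjacent u v"
  shows "gamma E w {u, v} = wt u v"
proof (rule antisym)
  show "gamma E w {u, v} \<le> wt u v"
  proof (rule gamma_le_if_card_le_3[OF simple])
    fix e assume "e \<in> E" "e \<subseteq> {u, v}"
    then have "e = {u, v}"
      using simple adjacentD(1)[OF uv] by (intro card_subset_eq) (auto simp: simple_graph_def)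
    then show "w e \<le> wt u v" by simp
  qed (use adjacentD(4)[OF uv] in \<open>auto simp: card_insert_if\<close>)
  show "wt u v \<le> gamma E w {u, v}"
    using matching_weight_le_gamma[OF simple_graph_finite_edges[OF simple], of "{u, v}" "{{u, v}}"] uv
    by (simp add: matching_in_def)
qed

lemma share_sum:
  assumes uv: "adjacent u v"
  shows "share u v + share v u = wt u v"
proof -
  have "x {u, v} u + x {u, v} v = gamma E w {u, v}"
    using efficiency[of "{u, v}"] adjacentD[OF uv] by simp
  then show ?thesis using gamma_edge[OF uv] by (simp add: insert_commute)
qed

lemma payoff_sum_triple:
  assumes "a \<noteq> b" "a \<noteq> c" "b \<noteq> c" "a \<in> V" "b \<in> V" "c \<in> V"
  shows "x {a, b, c} a + x {a, b, c} b + x {a, b, c} c = gamma E w {a, b, c}"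
  using efficiency[of "{a, b, c}"] assms by (simp add: add.assoc)

lemma triangle_vertices:
  assumes "triangle V E t"
  obtains a b c where "t = {a, b, c}" "adjacent a b" "adjacent a c" "adjacent b c"
proof -
  obtain a b c where "t = {a, b, c}" "a \<noteq> b" "a \<noteq> c" "b \<noteq> c"
    using assms by (auto simp: triangle_def card_3_iff)
  with assms show thesis using that by (auto simp: triangle_def)
qed

lemma heaviest_edge_shares:
  assumes uv: "adjacent u v" and uz: "adjacent u z" and vz: "adjacent v z"
    and heaviest: "wt u z \<le> wt u v" "wt v z \<le> wt u v"
  shows "share z u = 0" and "share z v = 0" and "wt u z \<le> share u v" and "wt v z \<le> share v u"
proof -
  let ?T = "{u, v, z}"
  have T: "?T \<subseteq> V" using adjacentD[OF uv] adjacentD[OF uz] by auto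
  have "gamma E w ?T \<le> wt u v"
  proof (rule gamma_le_if_card_le_3[OF simple])
    fix e assume "e \<in> E" "e \<subseteq> ?T"
    then have "e = {u, v} \<or> e = {u, z} \<or> e = {v, z}"
      using two_subset_of_triple[of e u v z] edge_card[of e] by blast
    then show "w e \<le> wt u v" using heaviest by auto
  qed (use adjacentD(4)[OF uv] in \<open>auto simp: card_insert_if\<close>)
  moreover have "x ?T u + x ?T v + x ?T z = gamma E w ?T"
    using adjacentD[OF uv] adjacentD[OF uz] adjacentD[OF vz] by (intro payoff_sum_triple) simp_all
  \<comment> \<open>The coalition \<open>{u, v, z}\<close> is worth no more than the pair \<open>{u, v}\<close>.\<close>
  ultimately have payoffs: "x ?T u + x ?T v + x ?T z \<le> share u v + share v u"
    using share_sum[OF uv] by simp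
  have "share u v \<le> x ?T u" "share u z \<le> x ?T u" "share v u \<le> x ?T v"
    "share v z \<le> x ?T v" "share z u \<le> x ?T z" "share z v \<le> x ?T z"
    using share_le_payoff[OF uv T] share_le_payoff[OF uz T] share_le_payoff[OF adjacent_sym[OF uv] T]
      share_le_payoff[OF vz T] share_le_payoff[OF adjacent_sym[OF uz] T]
      share_le_payoff[OF adjacent_sym[OF vz] T]
    by simp_all
  moreover have "0 \<le> share z u" "0 \<le> share z v"
    using share_nonneg[OF adjacent_sym[OF uz]] share_nonneg[OF adjacent_sym[OF vz]] by simp_all
  moreover have "share u z + share z u = wt u z" "share v z + share z v = wt v z"
    using share_sum uz vz by simp_all
  ultimately show "share z u = 0" "share z v = 0" "wt u z \<le> share u v" "wt v z \<le> share v u"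
    using payoffs by linarith+
qed

lemma induced_path_shares:
  assumes cp: "adjacent c p" and cq: "adjacent c q" and "p \<noteq> q" and "\<not> adjacent p q"
  shows "share p c + wt c q \<le> max (wt c p) (wt c q)"
    and "share q c + wt c p \<le> max (wt c p) (wt c q)"
proof -
  let ?T = "{p, c, q}"
  have T: "?T \<subseteq> V" using adjacentD[OF cp] adjacentD[OF cq] by auto
  have "gamma E w ?T \<le> max (wt c p) (wt c q)"
  proof (rule gamma_le_if_card_le_3[OF simple])
    fix e assume "e \<in> E" "e \<subseteq> ?T"
    then have "e = {p, c} \<or> e = {c, q}"
      using two_subset_of_triple[of e p c q] edge_card assms(4) by blast
    then show "w e \<le> max (wt c p) (wt c q)" by (auto simp: insert_commute)
  qed (use adjacentD(4)[OF cp] in \<open>auto simp: card_insert_if le_max_iff_disj\<close>)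
  moreover have "x ?T p + x ?T c + x ?T q = gamma E w ?T"
    using assms(3) adjacentD[OF cp] adjacentD[OF cq] by (intro payoff_sum_triple) simp_all
  ultimately have payoffs: "x ?T p + x ?T c + x ?T q \<le> max (wt c p) (wt c q)" by simp
  have "share p c \<le> x ?T p" "share c p \<le> x ?T c" "share c q \<le> x ?T c" "share q c \<le> x ?T q"
    using share_le_payoff[OF adjacent_sym[OF cp] T] share_le_payoff[OF cp T] share_le_payoff[OF cq T]
      share_le_payoff[OF adjacent_sym[OF cq] T]
    by simp_all
  moreover have "share c p + share p c = wt c p" "share c q + share q c = wt c q"
    using share_sum cp cq by simp_all
  ultimately show "share p c + wt c q \<le> max (wt c p) (wt c q)"
    and "share q c + wt c p \<le> max (wt c p) (wt c q)"
    using payoffs by linarith+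
qed

lemma induced_path_centre_share_pos:
  assumes cp: "adjacent c p" and cq: "adjacent c q" and "p \<noteq> q" and "\<not> adjacent p q"
  shows "0 < share c p"
proof -
  have "max (wt c p) (wt c q) < wt c p + wt c q"
    using adjacentD(4)[OF cp] adjacentD(4)[OF cq] by (simp add: max_def)
  then show ?thesis using induced_path_shares(1)[OF assms] share_sum[OF cp] by linarith
qed

lemma induced_path_leaf_share_zero:
  assumes cp: "adjacent c p" and cq: "adjacent c q" and "p \<noteq> q" and "\<not> adjacent p q"
  shows "share p c = 0 \<or> share q c = 0"
proof -
  have "0 \<le> share p c" "0 \<le> share q c"
    using share_nonneg[OF adjacent_sym[OF cp]] share_nonneg[OF adjacent_sym[OF cq]] by simp_all
  moreover have "max (wt c p) (wt c q) = wt c p \<or> max (wt c p) (wt c q) = wt c q"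
    by (simp add: max_def)
  ultimately show ?thesis using induced_path_shares[OF assms] by linarith
qed

text \<open>The third vertex \<open>z\<close> is called the apex.\<close>

definition top_edge :: "'a \<Rightarrow> 'a \<Rightarrow> 'a \<Rightarrow> bool" where
  "top_edge u v z \<longleftrightarrow> adjacent u v \<and> adjacent u z \<and> adjacent v z \<and> wt u z < wt u v \<and> wt v z < wt u v"

lemma top_edge_swap: "top_edge u v z \<Longrightarrow> top_edge v u z"
  by (auto simp: top_edge_def insert_commute)

lemma top_edge_shares:
  assumes "top_edge u v z"
  shows "share z u = 0" and "share z v = 0" and "wt u z \<le> share u v" and "wt v z \<le> share v u"
  using heaviest_edge_shares assms by (auto simp: top_edge_def)

lemma heaviest_edge_is_top_edge:
  assumes uv: "adjacent u v" and uz: "adjacent u z" and vz: "adjacent v z"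
    and heaviest: "wt u z \<le> wt u v" "wt v z \<le> wt u v"
  shows "top_edge u v z"
proof -
  have "wt u z \<le> share u v" "wt v z \<le> share v u" using heaviest_edge_shares(3,4)[OF assms] .
  then have "wt u z < wt u v" "wt v z < wt u v"
    using share_sum[OF uv] adjacentD(4)[OF uz] adjacentD(4)[OF vz] by linarith+
  then show ?thesis using uv uz vz by (simp add: top_edge_def)
qed

lemma triangle_top_edge_cases:
  assumes ab: "adjacent a b" and ac: "adjacent a c" and bc: "adjacent b c"
  shows "top_edge a b c \<or> top_edge a c b \<or> top_edge b c a"
proof -
  have sym: "wt b a = wt a b" "wt c a = wt a c" "wt c b = wt b c" by (simp_all add: wt_sym)
  consider "wt a c \<le> wt a b" "wt b c \<le> wt a b" | "wt a b \<le> wt a c" "wt b c \<le> wt a c"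
    | "wt a b \<le> wt b c" "wt a c \<le> wt b c" by linarith
  then show ?thesis
  proof cases
    case 1
    then show ?thesis using heaviest_edge_is_top_edge[OF ab ac bc] by blast
  next
    case 2
    then show ?thesis using heaviest_edge_is_top_edge[OF ac ab adjacent_sym[OF bc]] sym by simp
  next
    case 3
    then show ?thesis
      using heaviest_edge_is_top_edge[OF bc adjacent_sym[OF ab] adjacent_sym[OF ac]] sym by simp
  qed
qed

lemma top_edge_strict_max_edge:
  assumes "top_edge u v z"
  shows "strict_max_edge {u, v, z} w {u, v}"
  unfolding strict_max_edge_def
proof (intro conjI allI impI)
  show "{u, v} \<subseteq> {u, v, z}" by blast
  show "card {u, v} = 2" using assms adjacentD(1) by (simp add: top_edge_def)
  fix f assume "f \<subseteq> {u, v, z} \<and> card f = 2 \<and> f \<noteq> {u, v}"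
  then have "f = {u, z} \<or> f = {v, z}" using two_subset_of_triple[of f u v z] by blast
  then show "w f < wt u v" using assms unfolding top_edge_def by auto
qed

lemma triangle_positive_share:
  assumes ab: "adjacent a b" and ac: "adjacent a c" and bc: "adjacent b c"
  shows "0 < share b a \<or> 0 < share c a"
  using triangle_top_edge_cases[OF assms] top_edge_shares[of a b c] top_edge_shares[of a c b]
    top_edge_shares[of b c a] share_sum[OF ab] adjacentD(4)[OF ab] adjacentD(4)[OF bc]
  by (auto simp: wt_sym)

lemma apex_unique:
  assumes acb: "top_edge a c b" and adb: "top_edge a d b"
  shows "c = d"
proof (rule ccontr)
  assume cd: "c \<noteq> d"
  have ac: "adjacent a c" and bc: "adjacent b c" and ad: "adjacent a d" and bd: "adjacent b d"
    using acb adb by (auto simp: top_edge_def insert_commute)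
  have shares: "share b c = 0" "wt a b \<le> share a c" "wt c b \<le> share c a"
    "share b d = 0" "wt a b \<le> share a d" "wt d b \<le> share d a"
    using top_edge_shares[OF acb] top_edge_shares[OF adb] by simp_all
  have pos: "0 < wt a b" "0 < wt c b" "0 < wt d b"
    using acb adb adjacentD(4) by (auto simp: top_edge_def)
  show False
  proof (cases "adjacent c d")
    case True
    from triangle_top_edge_cases[OF ac ad True] show False
    proof (elim disjE)
      assume "top_edge a c d"
      then show False using top_edge_shares(1)[of a c d] shares pos by simp
    next
      assume "top_edge a d c"
      then show False using top_edge_shares(1)[of a d c] shares pos by simp
    next
      assume "top_edge c d a"
      then show False using top_edge_shares(1)[of c d a] shares pos by simp
    qed
  next
    case False
    have "share c b = 0 \<or> share d b = 0" using induced_path_leaf_share_zero[OF bc bd cd False] .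
    moreover have "share b c + share c b = wt b c" "share b d + share d b = wt b d"
      using share_sum bc bd by simp_all
    ultimately show False using shares pos wt_sym[of c b] wt_sym[of d b] by linarith
  qed
qed

lemma common_edge_not_apex:
  assumes ab: "adjacent a b" and ac: "adjacent a c" and bc: "adjacent b c"
    and ad: "adjacent a d" and bd: "adjacent b d" and cd: "c \<noteq> d"
  shows "\<not> top_edge a c b"
proof
  assume acb: "top_edge a c b"
  then have ba: "share b a = 0" by (rule top_edge_shares)
  from triangle_top_edge_cases[OF ab ad bd] show False
  proof (elim disjE)
    assume "top_edge a b d"
    then show False using top_edge_shares(4)[of a b d] ba adjacentD(4)[OF bd] by simp
  next
    assume "top_edge a d b"
    then show False using apex_unique acb cd by blast
  next
    assume "top_edge b d a"
    then show False using top_edge_shares(1)[of b d a] ba share_sum[OF ab] adjacentD(4)[OF ab] by simp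
  qed
qed

lemma common_edge_is_top_edge:
  assumes ab: "adjacent a b" and ac: "adjacent a c" and bc: "adjacent b c"
    and ad: "adjacent a d" and bd: "adjacent b d" and cd: "c \<noteq> d"
  shows "top_edge a b c"
  using triangle_top_edge_cases[OF ab ac bc] common_edge_not_apex[OF ab ac bc ad bd cd]
    common_edge_not_apex[OF adjacent_sym[OF ab] bc ac bd ad cd]
  by blast

lemma no_bowtie:
  assumes ab: "adjacent a b" and ac: "adjacent a c" and bc: "adjacent b c"
    and ad: "adjacent a d" and ae: "adjacent a e" and de: "adjacent d e"
    and disjoint: "b \<notin> {d, e}" "c \<notin> {d, e}"
  shows False
proof -
  \<comment> \<open>Adjacent \<open>p\<close> and \<open>q\<close> would make \<open>ap\<close> and \<open>aq\<close> each the top edge of the triangle \<open>apq\<close>;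
    non-adjacent ones form an induced path through \<open>a\<close> whose leaves both get a positive share.\<close>
  have absurd: False
    if ap: "adjacent a p" and ap': "adjacent a p'" and pp': "adjacent p p'"
      and aq: "adjacent a q" and aq': "adjacent a q'" and qq': "adjacent q q'"
      and "p \<noteq> q" "p \<noteq> q'" "p' \<noteq> q" and "0 < share p a" "0 < share q a" for p p' q q'
  proof (cases "adjacent p q")
    case True
    have "top_edge a p q" using common_edge_is_top_edge[OF ap aq True ap' pp'] \<open>p' \<noteq> q\<close> by simp
    moreover have "top_edge a q p"
      using common_edge_is_top_edge[OF aq ap adjacent_sym[OF True] aq' qq'] \<open>p \<noteq> q'\<close> by simp
    ultimately show False by (simp add: top_edge_def)
  next
    case False
    then show False
      using induced_path_leaf_share_zero[OF ap aq \<open>p \<noteq> q\<close>] \<open>0 < share p a\<close> \<open>0 < share q a\<close> by simp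
  qed
  from triangle_positive_share[OF ab ac bc] triangle_positive_share[OF ad ae de] show False
    using absurd[OF ab ac bc ad ae de] absurd[OF ab ac bc ae ad adjacent_sym[OF de]]
      absurd[OF ac ab adjacent_sym[OF bc] ad ae de] absurd[OF ac ab adjacent_sym[OF bc] ae ad adjacent_sym[OF de]]
      disjoint
    by auto
qed

lemma apex_neighbours:
  assumes top: "top_edge u v z" and zq: "adjacent z q"
  shows "q = u \<or> q = v"
proof (rule ccontr)
  assume q: "\<not> (q = u \<or> q = v)"
  have uv: "adjacent u v" and uz: "adjacent u z" and zv: "adjacent z v"
    using top by (auto simp: top_edge_def insert_commute)
  show False
  proof (cases "adjacent u q")
    case True
    have "top_edge u z v" using common_edge_is_top_edge[OF uz uv zv True zq] q by blast
    then show False using top by (simp add: top_edge_def)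
  next
    case False
    have "0 < share z u" using induced_path_centre_share_pos[OF adjacent_sym[OF uz] zq] q False by blast
    then show False using top_edge_shares(1)[OF top] by simp
  qed
qed

lemma shared_neighbour_neighbours:
  assumes top: "top_edge u v z" and uy: "adjacent u y" and vy: "adjacent v y" and yq: "adjacent y q"
  shows "q = u \<or> q = v"
proof -
  have "top_edge u v y"
  proof (cases "y = z")
    case False
    then show ?thesis using common_edge_is_top_edge[OF _ uy vy] top by (auto simp: top_edge_def)
  qed (use top in simp)
  then show ?thesis using apex_neighbours yq by blast
qed

lemma pendant_neighbour_neighbours:
  assumes top: "top_edge u v z" and uy: "adjacent u y" and yv: "y \<noteq> v" and vy: "\<not> adjacent v y"
    and yq: "adjacent y q"
  shows "q = u"
proof (rule ccontr)
  assume qu: "q \<noteq> u"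
  have uv: "adjacent u v" and uz: "adjacent u z" and vz: "adjacent v z"
    using top by (auto simp: top_edge_def)
  have "0 < share v u" using top_edge_shares(4)[OF top] adjacentD(4)[OF vz] by simp
  then have yu: "share y u = 0" using induced_path_leaf_share_zero[OF uv uy yv[symmetric] vy] by simp
  show False
  proof (cases "adjacent u q")
    case True
    have "z \<noteq> q"
    proof
      assume "z = q"
      then show False
        using apex_neighbours[OF top, of y] adjacent_sym[OF yq] adjacentD(1)[OF uy] yv by simp
    qed
    moreover have "z \<noteq> y" "v \<noteq> q" using vz yq vy by (auto simp: insert_commute)
    ultimately show False using no_bowtie[OF uv uz vz uy True yq] yv by auto
  next
    case False
    have "0 < share y u" using induced_path_centre_share_pos[OF adjacent_sym[OF uy] yq _ False] qu by auto
    then show False using yu by simp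
  qed
qed

lemma neighbour_neighbours:
  assumes "top_edge u v z" and "adjacent u y" and "y \<noteq> v" and "adjacent y q"
  shows "q = u \<or> q = v"
  using shared_neighbour_neighbours[OF assms(1,2) _ assms(4)]
    pendant_neighbour_neighbours[OF assms(1-3) _ assms(4)] by blast

lemma top_edge_vertex_cover:
  assumes conn: "connected_graph V E" and top: "top_edge u v z" and pq: "adjacent p q"
  shows "p \<in> {u, v} \<or> q \<in> {u, v}"
proof -
  define near where "near r \<longleftrightarrow> r \<in> {u, v} \<or> adjacent u r \<or> adjacent v r" for r
  have far: "q \<in> {u, v}" if "near r" "r \<notin> {u, v}" "adjacent r q" for r q
  proof -
    have "adjacent u r \<or> adjacent v r" using that(1,2) by (simp add: near_def)
    then show ?thesis
      using neighbour_neighbours[OF top _ _ that(3)]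
        neighbour_neighbours[OF top_edge_swap[OF top] _ _ that(3)] that(2)
      by auto
  qed
  have "near r" if "(u, r) \<in> (adj E)\<^sup>*" for r
    using that
  proof (induction rule: rtrancl_induct)
    case base
    then show ?case by (simp add: near_def)
  next
    case (step r q)
    then have "adjacent r q" by (simp add: adj_def)
    then show ?case using step.IH far[of r q] unfolding near_def by auto
  qed
  moreover have "u \<in> V" "p \<in> V" using top adjacentD(2) pq by (auto simp: top_edge_def)
  ultimately have "near p" using conn unfolding connected_graph_def by blast
  then show ?thesis using far pq by blast
qed

lemma triangle_through_top_edge:
  assumes conn: "connected_graph V E" and top: "top_edge u v z" and t: "triangle V E t"
  shows "\<exists>y. t = {u, v, y} \<and> top_edge u v y"
proof -
  have uv: "adjacent u v" and uz: "adjacent u z" and vz: "adjacent v z"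
    using top by (auto simp: top_edge_def)
  obtain a b c where abc: "t = {a, b, c}" and ab: "adjacent a b" and ac: "adjacent a c"
    and bc: "adjacent b c" using triangle_vertices[OF t] .
  have "u \<in> t" "v \<in> t"
    using top_edge_vertex_cover[OF conn top] ab ac bc abc adjacentD(1) uv by blast+
  then have "card (t - {u, v}) = 1"
    using t adjacentD(1)[OF uv] by (simp add: triangle_def card_Diff_subset)
  then obtain y where y: "t - {u, v} = {y}" by (rule card_1_singletonE)
  then have "t = {u, v, y}" using \<open>u \<in> t\<close> \<open>v \<in> t\<close> by blast
  moreover have "top_edge u v y"
  proof (cases "y = z")
    case False
    have "y \<in> t" "y \<noteq> u" "y \<noteq> v" using y by auto
    then have "adjacent u y" "adjacent v y"
      using t \<open>u \<in> t\<close> \<open>v \<in> t\<close> unfolding triangle_def by auto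
    then show ?thesis using common_edge_is_top_edge[OF uv _ _ uz vz False] by blast
  qed (use top in simp)
  ultimately show ?thesis by blast
qed

end

theorem mainTheorem13:
  fixes V :: "'a set" and E :: "'a set set" and w :: "'a set \<Rightarrow> real"
  assumes "simple_graph V E"
    and "\<forall>e\<in>E. w e > 0"
    and "connected_graph V E"
    and "population_monotonic V E w"
  shows "(\<forall>t1 t2. triangle V E t1 \<and> triangle V E t2 \<and> t1 \<noteq> t2 \<and> t1 \<inter> t2 \<noteq> {} \<longrightarrow>
            (\<exists>e\<in>E. e \<subseteq> t1 \<inter> t2 \<and> strict_max_edge t1 w e \<and> strict_max_edge t2 w e))
       \<and> (\<forall>t1 t2. triangle V E t1 \<and> triangle V E t2 \<longrightarrow> t1 \<inter> t2 \<noteq> {})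
       \<and> ((\<exists>t. triangle V E t) \<longrightarrow>
            (\<exists>e\<in>E. \<forall>t. triangle V E t \<longrightarrow> e \<subseteq> t \<and> strict_max_edge t w e))"
proof (cases "\<exists>t. triangle V E t")
  case True
  obtain x where "is_PMAS V E w x" using assms(4) unfolding population_monotonic_def by blast
  then interpret matching_pmas V E w x using assms(1,2) by unfold_locales
  obtain t0 a b c where "triangle V E t0" "adjacent a b" "adjacent a c" "adjacent b c"
    using True triangle_vertices by metis
  then obtain u v z where top: "top_edge u v z" using triangle_top_edge_cases by blast
  have "{u, v} \<subseteq> t \<and> strict_max_edge t w {u, v}" if "triangle V E t" for t
    using triangle_through_top_edge[OF assms(3) top that] top_edge_strict_max_edge by fastforce
  moreover have "{u, v} \<in> E" and "{u, v} \<noteq> {}" using top by (auto simp: top_edge_def)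
  ultimately show ?thesis by blast
qed blast

end
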